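(* Assume $abcd\neq0$. For every $\omega$ on the unit circle, \[T(\omega)=\frac{|a|^2}{|a|^2+|b|^2{\zeta'_M}^2},\qquad R(\omega)=\frac{|b|^2{\zeta'_M}^2}{|a|^2+|b|^2{\zeta'_M}^2},\] so in particular $T(\omega)+R(\omega)=1$.
   Context: Setting: $M\ge1$, $C=\begin{bmatrix} a&b\\ c&d\end{bmatrix}$ a $2\times2$ unitary matrix, $\Delta=\det C$; $|L\rangle=(1,0)^\top$, $|R\rangle=(0,1)^\top$; $\Gamma_M=\{0,\dots,M-1\}$. $E_M$ is the linear map on $\ell^2(\Gamma_M;\mathbb{C}^2)$ with $(E_M\varphi)(x)=P\varphi(x+1)+Q\varphi(x-1)$, $\varphi(-1)=\varphi(M)=0$, $P=\begin{bmatrix} a&b\\0&0\end{bmatrix}$, $Q=\begin{bmatrix}0&0\\c&d\end{bmatrix}$. For $\xi\in\mathbb{R}$, $z=e^{-i\xi}$, let $\varphi$ be the unique solution of $(z-E_M)\varphi=\delta_0|R\rangle$, and write $\varphi(x;L)=\langle L|\varphi(x)\rangle$, $\varphi(x;R)=\langle R|\varphi(x)\rangle$. Fix a square root $\Delta^{1/2}$ and set $\omega=\Delta^{-1/2}z$ (on the unit circle). The transmission and reflection rates are $T(\omega)=|d\,\varphi(M-1;R)|^2$ and $R(\omega)=|a\,\varphi(0;L)+b\,\varphi(0;R)|^2$. Put $x(\omega)=\frac{\omega+\omega^{-1}}{2|a|}$ and $\zeta'_m=U_{m-1}(x(\omega))$, $U_m$ the Chebyshev polynomials of the second kind ($U_{-1}=0$,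 $U_0=1$, $U_{m+1}(t)=2tU_m(t)-U_{m-1}(t)$). *)

theory Defs
  imports "HOL-Analysis.Analysis"
begin

definition adj2 :: "complex^2^2 \<Rightarrow> complex^2^2" where
  "adj2 C = (\<chi> i j. cnj (C $ j $ i))"

definition unitary2 :: "complex^2^2 \<Rightarrow> bool" where
  "unitary2 C \<longleftrightarrow> adj2 C ** C = mat 1 \<and> C ** adj2 C = mat 1"

text \<open>Basis vector |R> = (0,1); <L|v> = v$1, <R|v> = v$2.\<close>
definition ketR :: "complex^2" where "ketR = (\<chi> i. if i = 2 then 1 else 0)"

definition Pm :: "complex^2^2 \<Rightarrow> complex^2^2" where
  "Pm C = (\<chi> i j. if i = 1 then C $ i $ j else 0)"
definition Qm :: "complex^2^2 \<Rightarrow> complex^2^2" where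
  "Qm C = (\<chi> i j. if i = 2 then C $ i $ j else 0)"

text \<open>Elements of l^2(Gamma_M; C^2) are represented as functions int => complex^2;
  only the values on Gamma_M = {0..M-1} matter; outside they are read as 0
  (boundary condition phi(-1) = phi(M) = 0).\<close>
definition ext0 :: "nat \<Rightarrow> (int \<Rightarrow> complex^2) \<Rightarrow> int \<Rightarrow> complex^2" where
  "ext0 M \<phi> y = (if 0 \<le> y \<and> y < int M then \<phi> y else 0)"

definition EM :: "nat \<Rightarrow> complex^2^2 \<Rightarrow> (int \<Rightarrow> complex^2) \<Rightarrow> int \<Rightarrow> complex^2" where
  "EM M C \<phi> x = Pm C *v ext0 M \<phi> (x + 1) + Qm C *v ext0 M \<phi> (x - 1)"

text \<open>Chebyshev polynomials of the second kind, shifted: chebU' m t = U_{m-1}(t),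
  so chebU' 0 = U_{-1} = 0, chebU' 1 = U_0 = 1.\<close>
fun chebU' :: "nat \<Rightarrow> complex \<Rightarrow> complex" where
  "chebU' 0 t = 0"
| "chebU' (Suc 0) t = 1"
| "chebU' (Suc (Suc m)) t = 2 * t * chebU' (Suc m) t - chebU' m t"

end

theory Submission
  imports Defs
begin

(* Write q n = z phi(n)_R and p n = (P phi(n))_L for the amplitudes entering and leaving
   site n.  The resolvent equation turns into a first-order recursion (q, p)(n+1) = T (q, p)(n)
   whose transfer matrix T, after removing a unimodular phase, is [[alpha, beta], [cnj beta,
   cnj alpha]] with |alpha|^2 - |beta|^2 = 1, i.e. lies in SU(1,1).  Hence |q|^2 - |p|^2 is
   conserved (T + R = 1), and p obeys the three-term recurrence with coefficient Re alpha =
   x(omega), so p(M) is a combination of Chebyshev polynomials U_{M-1}, U_{M-2}.  The boundary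
   conditions q(0) = 1, p(M) = 0 then determine p(0), and the Cassini identity for U evaluates
   |p(0)|^2. *)

lemma chebU'_real: "t \<in> \<real> \<Longrightarrow> chebU' n t \<in> \<real>"
  by (induction n t rule: chebU'.induct) auto

lemma chebU'_cassini:
  "(chebU' (Suc n) t)\<^sup>2 - 2 * t * chebU' (Suc n) t * chebU' n t + (chebU' n t)\<^sup>2 = 1"
  by (induction n) (simp_all add: power2_eq_square algebra_simps)

lemma chebyshev_recurrence_solution:
  fixes y :: "nat \<Rightarrow> complex"
  assumes rec: "\<And>n. n + 2 \<le> M \<Longrightarrow> y (n + 2) = 2 * t * y (n + 1) - y n"
  shows "n < M \<Longrightarrow> y (Suc n) = chebU' (Suc n) t * y 1 - chebU' n t * y 0"
proof (induction n rule: less_induct)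
  case (less n)
  show ?case
  proof (cases n)
    case (Suc m)
    show ?thesis
    proof (cases m)
      case 0
      then show ?thesis using rec[of 0] less.prems \<open>n = Suc m\<close> by (simp add: numeral_2_eq_2)
    next
      case (Suc k)
      have "y (Suc n) = 2 * t * y n - y m"
        using rec[of m] less.prems \<open>n = Suc m\<close> by (simp add: numeral_2_eq_2)
      moreover have "y n = chebU' n t * y 1 - chebU' m t * y 0"
        using less.IH[of m] less.prems \<open>n = Suc m\<close> by simp
      moreover have "y m = chebU' m t * y 1 - chebU' k t * y 0"
        using less.IH[of k] less.prems \<open>n = Suc m\<close> \<open>m = Suc k\<close> by simp
      moreover have "chebU' (Suc n) t = 2 * t * chebU' n t - chebU' m t"
        and "chebU' n t = 2 * t * chebU' m t - chebU' k t"
        using \<open>n = Suc m\<close> \<open>m = Suc k\<close> by simp_all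
      ultimately show ?thesis
        by algebra
    qed
  qed simp
qed

definition su11_chain ::
    "nat \<Rightarrow> complex \<Rightarrow> complex \<Rightarrow> (nat \<Rightarrow> complex) \<Rightarrow> (nat \<Rightarrow> complex) \<Rightarrow> bool" where
  "su11_chain M \<alpha> \<beta> q p \<longleftrightarrow>
     (\<forall>n<M. q (Suc n) = \<alpha> * q n + \<beta> * p n \<and> p (Suc n) = cnj \<beta> * q n + cnj \<alpha> * p n)"

lemma su11_chain_divide_phase:
  assumes "\<kappa> \<noteq> 0"
    and "\<forall>n<M. q (Suc n) = \<kappa> * (\<alpha> * q n + \<beta> * p n) \<and> p (Suc n) = \<kappa> * (cnj \<beta> * q n + cnj \<alpha> * p n)"
  shows "su11_chain M \<alpha> \<beta> (\<lambda>n. q n / \<kappa> ^ n) (\<lambda>n. p n / \<kappa> ^ n)"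
  using assms by (simp add: su11_chain_def add_divide_distrib)

lemma su11_norm_diff:
  "(cmod (\<alpha> * q + \<beta> * p))\<^sup>2 - (cmod (cnj \<beta> * q + cnj \<alpha> * p))\<^sup>2
     = ((cmod \<alpha>)\<^sup>2 - (cmod \<beta>)\<^sup>2) * ((cmod q)\<^sup>2 - (cmod p)\<^sup>2)"
proof -
  have "complex_of_real ((cmod (\<alpha> * q + \<beta> * p))\<^sup>2 - (cmod (cnj \<beta> * q + cnj \<alpha> * p))\<^sup>2)
      = of_real (((cmod \<alpha>)\<^sup>2 - (cmod \<beta>)\<^sup>2) * ((cmod q)\<^sup>2 - (cmod p)\<^sup>2))"
    by (simp only: of_real_diff of_real_mult complex_norm_square) (simp add: algebra_simps)
  then show ?thesis
    using of_real_eq_iff by blast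
qed

lemma su11_chain_norm_diff:
  assumes "su11_chain M \<alpha> \<beta> q p" and "(cmod \<alpha>)\<^sup>2 - (cmod \<beta>)\<^sup>2 = 1" and "n \<le> M"
  shows "(cmod (q n))\<^sup>2 - (cmod (p n))\<^sup>2 = (cmod (q 0))\<^sup>2 - (cmod (p 0))\<^sup>2"
  using \<open>n \<le> M\<close>
proof (induction n)
  case (Suc n)
  then show ?case
    using assms(1,2) su11_norm_diff[of \<alpha> "q n" \<beta> "p n"] by (simp add: su11_chain_def)
qed simp

lemma su11_chain_second_order:
  assumes "su11_chain M \<alpha> \<beta> q p" and "(cmod \<alpha>)\<^sup>2 - (cmod \<beta>)\<^sup>2 = 1" and "n + 2 \<le> M"
  shows "p (n + 2) = 2 * of_real (Re \<alpha>) * p (n + 1) - p n"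
proof -
  have step: "q (Suc m) = \<alpha> * q m + \<beta> * p m" "p (Suc m) = cnj \<beta> * q m + cnj \<alpha> * p m"
    if "m < M" for m
    using assms(1) that by (simp_all add: su11_chain_def)
  have det: "\<alpha> * cnj \<alpha> - \<beta> * cnj \<beta> = 1"
    using assms(2) by (simp only: complex_norm_square[symmetric] of_real_diff[symmetric]) simp
  have "p (n + 2) = cnj \<beta> * (\<alpha> * q n + \<beta> * p n) + cnj \<alpha> * p (n + 1)"
    using step[of "Suc n"] step[of n] \<open>n + 2 \<le> M\<close> by simp
  also have "\<dots> = (\<alpha> + cnj \<alpha>) * p (n + 1) - (\<alpha> * cnj \<alpha> - \<beta> * cnj \<beta>) * p n"
    using step[of n] \<open>n + 2 \<le> M\<close> by (simp add: algebra_simps)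
  also have "\<alpha> + cnj \<alpha> = 2 * of_real (Re \<alpha>)"
    by (simp add: complex_add_cnj)
  finally show ?thesis
    using det by simp
qed

lemma su11_chain_reflection:
  assumes chain: "su11_chain M \<alpha> \<beta> q p" and unimod: "(cmod \<alpha>)\<^sup>2 - (cmod \<beta>)\<^sup>2 = 1"
    and "q 0 = 1" and "p M = 0"
  defines "\<zeta> \<equiv> Re (chebU' M (of_real (Re \<alpha>)))"
  shows "(cmod (p 0))\<^sup>2 = (cmod \<beta>)\<^sup>2 * \<zeta>\<^sup>2 / (1 + (cmod \<beta>)\<^sup>2 * \<zeta>\<^sup>2)"
proof (cases M)
  case 0
  then show ?thesis using \<open>p M = 0\<close> by (simp add: \<zeta>_def)
next
  case (Suc m)
  define x where "x = Re \<alpha>"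
  define \<zeta>' where "\<zeta>' = Re (chebU' m (of_real x))"
  have \<zeta>_real: "chebU' M (of_real x) = of_real \<zeta>" and \<zeta>'_real: "chebU' m (of_real x) = of_real \<zeta>'"
    using chebU'_real[of "of_real x"] by (simp_all add: \<zeta>_def \<zeta>'_def x_def)
  have "p M = chebU' M (of_real x) * p 1 - chebU' m (of_real x) * p 0"
    using chebyshev_recurrence_solution[where y = p and t = "of_real x" and n = m and M = M]
      su11_chain_second_order[OF chain unimod]
    by (simp add: Suc x_def)
  moreover have "p 1 = cnj \<beta> + cnj \<alpha> * p 0"
    using chain \<open>q 0 = 1\<close> by (simp add: su11_chain_def Suc)
  ultimately have amplitude: "p 0 * (of_real \<zeta> * cnj \<alpha> - of_real \<zeta>') = - of_real \<zeta> * cnj \<beta>"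
    using \<open>p M = 0\<close> \<zeta>_real \<zeta>'_real by (simp add: algebra_simps)
  have "complex_of_real (\<zeta>\<^sup>2 - 2 * x * \<zeta> * \<zeta>' + \<zeta>'\<^sup>2) = 1"
    using chebU'_cassini[of m "of_real x"] unfolding Suc[symmetric] \<zeta>_real \<zeta>'_real by simp
  then have cassini: "\<zeta>\<^sup>2 - 2 * x * \<zeta> * \<zeta>' + \<zeta>'\<^sup>2 = 1"
    using of_real_eq_1_iff by blast
  have "(cmod (of_real \<zeta> * cnj \<alpha> - of_real \<zeta>'))\<^sup>2
      = \<zeta>\<^sup>2 * (cmod \<alpha>)\<^sup>2 - 2 * x * \<zeta> * \<zeta>' + \<zeta>'\<^sup>2"
    unfolding cmod_power2 by (simp add: x_def power2_eq_square algebra_simps)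
  also have "\<dots> = 1 + (cmod \<beta>)\<^sup>2 * \<zeta>\<^sup>2"
    using cassini unimod by (simp add: algebra_simps)
  finally have "(cmod (p 0))\<^sup>2 * (1 + (cmod \<beta>)\<^sup>2 * \<zeta>\<^sup>2) = (cmod \<beta>)\<^sup>2 * \<zeta>\<^sup>2"
    using arg_cong[OF amplitude, of "\<lambda>w. (cmod w)\<^sup>2"]
    by (simp add: norm_mult power_mult_distrib)
  moreover have "1 + (cmod \<beta>)\<^sup>2 * \<zeta>\<^sup>2 > 0"
    by (simp add: add_pos_nonneg)
  ultimately show ?thesis
    by (simp add: eq_divide_eq)
qed

lemma unitary2_entries:
  assumes "unitary2 C"
  shows "(cmod (C$1$1))\<^sup>2 + (cmod (C$1$2))\<^sup>2 = 1"
    and "C$2$1 = - det C * cnj (C$1$2)"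
    and "C$2$2 = det C * cnj (C$1$1)"
    and "cmod (det C) = 1"
proof -
  define a b c d where "a = C$1$1" and "b = C$1$2" and "c = C$2$1" and "d = C$2$2"
  have unit: "C ** adj2 C = mat 1"
    using assms by (simp add: unitary2_def)
  have "C$i$1 * cnj (C$j$1) + C$i$2 * cnj (C$j$2) = (if i = j then 1 else 0)" for i j
  proof -
    have "C$i$1 * cnj (C$j$1) + C$i$2 * cnj (C$j$2) = (C ** adj2 C)$i$j"
      by (simp add: matrix_matrix_mult_def adj2_def sum_2)
    then show ?thesis
      by (simp add: unit mat_def)
  qed
  from this[of 1 1] this[of 2 1] this[of 2 2]
  have row1: "a * cnj a + b * cnj b = 1"
    and rows12: "c * cnj a + d * cnj b = 0" and row2: "c * cnj c + d * cnj d = 1"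
    by (simp_all add: a_def b_def c_def d_def)
  have det: "det C = a * d - b * c"
    by (simp add: det_2 a_def b_def c_def d_def)
  have "det C * cnj a = d * (a * cnj a + b * cnj b) - b * (c * cnj a + d * cnj b)"
    by (simp add: det algebra_simps)
  then show d: "C$2$2 = det C * cnj (C$1$1)"
    using row1 rows12 by (simp add: d_def a_def)
  have "det C * cnj b = a * (c * cnj a + d * cnj b) - c * (a * cnj a + b * cnj b)"
    by (simp add: det algebra_simps)
  then show c: "C$2$1 = - det C * cnj (C$1$2)"
    using row1 rows12 by (simp add: c_def b_def)
  show "(cmod (C$1$1))\<^sup>2 + (cmod (C$1$2))\<^sup>2 = 1"
    using row1 unfolding a_def b_def complex_norm_square
    by (metis of_real_1 of_real_add of_real_eq_iff complex_norm_square)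
  have "det C * cnj (det C) * (a * cnj a + b * cnj b) = c * cnj c + d * cnj d"
    using c d by (simp add: a_def b_def c_def d_def algebra_simps)
  then have "(cmod (det C))\<^sup>2 = 1"
    using row1 row2 by (metis complex_norm_square mult_1_right of_real_eq_1_iff)
  then show "cmod (det C) = 1"
    using norm_ge_zero[of "det C"] by (auto simp: power2_eq_1_iff)
qed

lemma EM_components:
  "EM M C \<phi> x $ 1 = C$1$1 * ext0 M \<phi> (x + 1) $ 1 + C$1$2 * ext0 M \<phi> (x + 1) $ 2"
  "EM M C \<phi> x $ 2 = C$2$1 * ext0 M \<phi> (x - 1) $ 1 + C$2$2 * ext0 M \<phi> (x - 1) $ 2"
  by (simp_all add: EM_def Pm_def Qm_def matrix_vector_mult_def sum_2)

lemma resolvent_equations: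
  assumes sol: "\<forall>x\<in>{0..<int M}. z *s \<phi> x - EM M C \<phi> x = (if x = 0 then ketR else 0)"
    and "n < M"
  shows "z * \<phi> n $ 1 = (if Suc n < M then C$1$1 * \<phi> (n + 1) $ 1 + C$1$2 * \<phi> (n + 1) $ 2 else 0)"
    and "z * \<phi> n $ 2 = (if n = 0 then 1 else C$2$1 * \<phi> (n - 1) $ 1 + C$2$2 * \<phi> (n - 1) $ 2)"
proof -
  have "z *s \<phi> n - EM M C \<phi> n = (if n = 0 then ketR else 0)"
    using sol \<open>n < M\<close> by simp
  from arg_cong[OF this, of "\<lambda>v. v $ 1"] arg_cong[OF this, of "\<lambda>v. v $ 2"]
  have "z * \<phi> n $ 1 - EM M C \<phi> n $ 1 = 0"
    and "z * \<phi> n $ 2 - EM M C \<phi> n $ 2 = (if n = 0 then 1 else 0)"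
    by (simp_all add: ketR_def)
  then show "z * \<phi> n $ 1 = (if Suc n < M then C$1$1 * \<phi> (n + 1) $ 1 + C$1$2 * \<phi> (n + 1) $ 2 else 0)"
    and "z * \<phi> n $ 2 = (if n = 0 then 1 else C$2$1 * \<phi> (n - 1) $ 1 + C$2$2 * \<phi> (n - 1) $ 2)"
    using \<open>n < M\<close> by (auto simp: EM_components ext0_def of_nat_diff add.commute)
qed

lemma resolvent_amplitudes:
  assumes sol: "\<forall>x\<in>{0..<int M}. z *s \<phi> x - EM M C \<phi> x = (if x = 0 then ketR else 0)"
    and "M \<ge> 1" and "z \<noteq> 0"
  obtains q p where
    "\<forall>n<M. C$1$1 * q (Suc n) = det C / z * q n + C$2$1 * p n
            \<and> C$1$1 * p (Suc n) = z * p n - C$1$2 * q n"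
    and "q 0 = 1" and "p M = 0"
    and "p 0 = C$1$1 * \<phi> 0 $ 1 + C$1$2 * \<phi> 0 $ 2"
    and "q M = C$2$2 * \<phi> (int M - 1) $ 2"
proof
  define a b c d where "a = C$1$1" and "b = C$1$2" and "c = C$2$1" and "d = C$2$2"
  define u v where "u n = \<phi> (int n) $ 1" and "v n = \<phi> (int n) $ 2" for n
  \<comment> \<open>For n < M these are z * v n and a * u n + b * v n (q_site, p_site); the branches are
      chosen so that the source gives q 0 = 1 and the boundary condition gives p M = 0.\<close>
  define q where "q n = (if n = 0 then 1 else c * u (n - 1) + d * v (n - 1))" for n
  define p where "p n = (if n = 0 then a * u 0 + b * v 0 else z * u (n - 1))" for n
  have q_site: "q n = z * v n" and p_site: "p n = a * u n + b * v n" if "n < M" for n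
    using resolvent_equations[OF sol that] resolvent_equations[OF sol, of "n - 1"] that
    by (auto simp: q_def p_def u_def v_def a_def b_def c_def d_def of_nat_diff)
  show "\<forall>n<M. a * q (Suc n) = det C / z * q n + c * p n \<and> a * p (Suc n) = z * p n - b * q n"
    using q_site p_site \<open>z \<noteq> 0\<close>
    by (simp add: q_def p_def det_2 a_def b_def c_def d_def field_simps)
  have "u (M - 1) = 0"
    using resolvent_equations(1)[OF sol, of "M - 1"] \<open>M \<ge> 1\<close> \<open>z \<noteq> 0\<close> by (simp add: u_def)
  then show "p M = 0" and "q M = d * \<phi> (int M - 1) $ 2"
    using \<open>M \<ge> 1\<close> by (simp_all add: p_def q_def v_def of_nat_diff)
  show "q 0 = 1" and "p 0 = a * \<phi> 0 $ 1 + b * \<phi> 0 $ 2"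
    by (simp_all add: p_def q_def u_def v_def)
qed

lemma unitary2_transfer_su11_chain:
  assumes "unitary2 C" and "C$1$1 \<noteq> 0" and "cmod z = 1" and "s\<^sup>2 = det C"
    and rec: "\<forall>n<M. C$1$1 * q (Suc n) = det C / z * q n + C$2$1 * p n
                   \<and> C$1$1 * p (Suc n) = z * p n - C$1$2 * q n"
  defines "\<omega> \<equiv> z / s" and "A \<equiv> cmod (C$1$1)"
  defines "\<alpha> \<equiv> inverse \<omega> / of_real A" and "\<beta> \<equiv> C$2$1 / (s * of_real A)"
    and "\<kappa> \<equiv> s * of_real A / C$1$1"
  shows "su11_chain M \<alpha> \<beta> (\<lambda>n. q n / \<kappa> ^ n) (\<lambda>n. p n / \<kappa> ^ n)"
    and "(cmod \<alpha>)\<^sup>2 - (cmod \<beta>)\<^sup>2 = 1"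
    and "cmod \<kappa> = 1"
    and "cmod \<beta> = cmod (C$1$2) / A"
    and "(\<omega> + inverse \<omega>) / (2 * of_real A) = of_real (Re \<alpha>)"
proof -
  define a b c where "a = C$1$1" and "b = C$1$2" and "c = C$2$1"
  have ab: "A\<^sup>2 + (cmod b)\<^sup>2 = 1" and c: "c = - det C * cnj b" and "cmod (det C) = 1"
    using unitary2_entries[OF \<open>unitary2 C\<close>] by (simp_all add: A_def a_def b_def c_def)
  then have "(cmod s)\<^sup>2 = 1"
    using \<open>s\<^sup>2 = det C\<close> by (metis norm_power)
  then have s: "cmod s = 1"
    using norm_ge_zero[of s] by (auto simp: power2_eq_1_iff)
  have A: "A > 0"
    using \<open>C$1$1 \<noteq> 0\<close> by (simp add: A_def)
  have \<omega>: "cmod \<omega> = 1"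
    using s \<open>cmod z = 1\<close> by (simp add: \<omega>_def norm_divide)
  have s_nz: "s \<noteq> 0" and a_nz: "a \<noteq> 0"
    using s \<open>C$1$1 \<noteq> 0\<close> by (auto simp: a_def)
  have cnj_s: "cnj s = inverse s" and cnj_\<omega>: "cnj \<omega> = inverse \<omega>"
    using divide_conv_cnj[of _ 1] s \<omega> by (metis divide_inverse mult_1_left)+
  have cnj_\<alpha>: "cnj \<alpha> = \<omega> / of_real A"
    using cnj_\<omega> by (simp add: \<alpha>_def)
  have cnj_\<beta>: "cnj \<beta> = - b / (s * of_real A)"
    using s_nz \<open>s\<^sup>2 = det C\<close>[symmetric]
    by (simp add: \<beta>_def c_def[symmetric] c cnj_s field_simps power2_eq_square)
  have "\<kappa> \<noteq> 0"
    using s_nz A a_nz by (simp add: \<kappa>_def a_def)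
  moreover have "\<forall>n<M. q (Suc n) = \<kappa> * (\<alpha> * q n + \<beta> * p n)
                     \<and> p (Suc n) = \<kappa> * (cnj \<beta> * q n + cnj \<alpha> * p n)"
  proof (intro allI impI)
    fix n
    assume "n < M"
    then have "q (Suc n) = det C / z / a * q n + c / a * p n"
      and "p (Suc n) = - b / a * q n + z / a * p n"
      using rec a_nz by (simp_all add: a_def b_def c_def field_simps)
    moreover have "\<kappa> * \<alpha> = det C / z / a" and "\<kappa> * \<beta> = c / a"
      and "\<kappa> * cnj \<beta> = - b / a" and "\<kappa> * cnj \<alpha> = z / a"
      using s_nz A \<open>s\<^sup>2 = det C\<close>[symmetric] unfolding cnj_\<alpha> cnj_\<beta>
      by (simp_all add: \<kappa>_def \<alpha>_def \<beta>_def \<omega>_def a_def c_def power2_eq_square)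
    ultimately show "q (Suc n) = \<kappa> * (\<alpha> * q n + \<beta> * p n)
                     \<and> p (Suc n) = \<kappa> * (cnj \<beta> * q n + cnj \<alpha> * p n)"
      by (simp add: distrib_left mult.assoc[symmetric])
  qed
  ultimately show "su11_chain M \<alpha> \<beta> (\<lambda>n. q n / \<kappa> ^ n) (\<lambda>n. p n / \<kappa> ^ n)"
    by (rule su11_chain_divide_phase)
  show "cmod \<kappa> = 1"
    using s A by (simp add: \<kappa>_def norm_divide norm_mult A_def)
  show \<beta>: "cmod \<beta> = cmod (C$1$2) / A"
    using s A \<open>cmod (det C) = 1\<close> by (simp add: \<beta>_def c_def[symmetric] c norm_divide norm_mult b_def)
  have "cmod \<alpha> = 1 / A"
    using \<omega> A by (simp add: \<alpha>_def norm_divide norm_inverse)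
  then show "(cmod \<alpha>)\<^sup>2 - (cmod \<beta>)\<^sup>2 = 1"
    using A ab by (simp add: \<beta> b_def power_divide diff_divide_distrib[symmetric])
  have "\<omega> + inverse \<omega> = 2 * of_real (Re \<omega>)"
    using complex_add_cnj[of \<omega>] by (simp add: cnj_\<omega>)
  then show "(\<omega> + inverse \<omega>) / (2 * of_real A) = of_real (Re \<alpha>)"
    by (simp add: \<alpha>_def flip: cnj_\<omega>)
qed

theorem mainTheorem4:
  fixes M :: nat and C :: "complex^2^2" and \<xi> :: real
    and sqrtDelta :: complex and \<phi> :: "int \<Rightarrow> complex^2"
  assumes "M \<ge> 1"
    and "unitary2 C"
    and "C$1$1 * C$1$2 * C$2$1 * C$2$2 \<noteq> 0"
    and "sqrtDelta ^ 2 = det C"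
    and sol: "\<forall>x\<in>{0..<int M}. exp (- \<i> * of_real \<xi>) *s \<phi> x - EM M C \<phi> x
               = (if x = 0 then ketR else 0)"
  shows "let a = C$1$1; b = C$1$2; d = C$2$2;
             z = exp (- \<i> * of_real \<xi>);
             \<omega> = z / sqrtDelta;
             T = (cmod (d * (\<phi> (int M - 1) $ 2)))\<^sup>2;
             R = (cmod (a * (\<phi> 0 $ 1) + b * (\<phi> 0 $ 2)))\<^sup>2;
             \<zeta> = chebU' M ((\<omega> + inverse \<omega>) / (2 * of_real (cmod a)))
         in complex_of_real T = of_real ((cmod a)\<^sup>2) / (of_real ((cmod a)\<^sup>2) + of_real ((cmod b)\<^sup>2) * \<zeta>\<^sup>2)
          \<and> complex_of_real R = of_real ((cmod b)\<^sup>2) * \<zeta>\<^sup>2 / (of_real ((cmod a)\<^sup>2) + of_real ((cmod b)\<^sup>2) * \<zeta>\<^sup>2)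
          \<and> T + R = 1"
proof -
  define z where "z = exp (- \<i> * of_real \<xi>)"
  define A B where "A = cmod (C$1$1)" and "B = cmod (C$1$2)"
  define \<omega> where "\<omega> = z / sqrtDelta"
  define \<kappa> where "\<kappa> = sqrtDelta * of_real A / C$1$1"
  define \<alpha> \<beta> where "\<alpha> = inverse \<omega> / of_real A" and "\<beta> = C$2$1 / (sqrtDelta * of_real A)"
  define \<zeta> where "\<zeta> = Re (chebU' M (of_real (Re \<alpha>)))"
  define D where "D = A\<^sup>2 + B\<^sup>2 * \<zeta>\<^sup>2"
  have "C$1$1 \<noteq> 0" and "A > 0" and "D > 0"
    using assms(3) by (auto simp: A_def D_def add_pos_nonneg)
  have "cmod z = 1" and "z \<noteq> 0"
    using norm_exp_i_times[of "- \<xi>"] by (auto simp: z_def)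
  obtain q p where rec: "\<forall>n<M. C$1$1 * q (Suc n) = det C / z * q n + C$2$1 * p n
                                \<and> C$1$1 * p (Suc n) = z * p n - C$1$2 * q n"
    and "q 0 = 1" and "p M = 0" and R: "p 0 = C$1$1 * \<phi> 0 $ 1 + C$1$2 * \<phi> 0 $ 2"
    and T: "q M = C$2$2 * \<phi> (int M - 1) $ 2"
    using resolvent_amplitudes[of M z \<phi> C] sol \<open>M \<ge> 1\<close> \<open>z \<noteq> 0\<close> unfolding z_def by blast
  note transfer = unitary2_transfer_su11_chain[OF \<open>unitary2 C\<close> \<open>C$1$1 \<noteq> 0\<close> \<open>cmod z = 1\<close>
      \<open>sqrtDelta ^ 2 = det C\<close> rec, folded \<omega>_def A_def, folded \<alpha>_def \<beta>_def \<kappa>_def]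
  have "(cmod (p 0))\<^sup>2 = (cmod \<beta>)\<^sup>2 * \<zeta>\<^sup>2 / (1 + (cmod \<beta>)\<^sup>2 * \<zeta>\<^sup>2)"
    using su11_chain_reflection[OF transfer(1,2)] \<open>q 0 = 1\<close> \<open>p M = 0\<close> by (simp add: \<zeta>_def)
  then have reflection: "(cmod (p 0))\<^sup>2 = B\<^sup>2 * \<zeta>\<^sup>2 / D"
    using transfer(4) \<open>A > 0\<close> by (simp add: D_def B_def power_divide field_simps)
  have "(cmod (q M))\<^sup>2 = 1 - (cmod (p 0))\<^sup>2"
    using su11_chain_norm_diff[OF transfer(1,2), of M] transfer(3) \<open>q 0 = 1\<close> \<open>p M = 0\<close>
    by (simp add: norm_divide norm_power)
  then have transmission: "(cmod (q M))\<^sup>2 = A\<^sup>2 / D"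
    using reflection \<open>D > 0\<close> by (simp add: D_def field_simps)
  have "chebU' M ((\<omega> + inverse \<omega>) / (2 * of_real A)) = of_real \<zeta>"
    using transfer(5) chebU'_real[of "of_real (Re \<alpha>)" M] by (simp add: \<zeta>_def)
  then show ?thesis
    unfolding Let_def z_def[symmetric] \<omega>_def[symmetric] A_def[symmetric] B_def[symmetric]
      R[symmetric] T[symmetric] reflection transmission
    using \<open>D > 0\<close> by (simp add: D_def add_divide_distrib[symmetric])
qed

end
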